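(* Let $C=\mathtt{while}(\varphi)\{C_{\mathrm{body}}\}[I]$ be a $\mathsf{pGCL}$ loop with loop-free body $C_{\mathrm{body}}$, and let $f\in\mathbb{E}$. If (1) $[\varphi]\cdot\mathrm{awp}[\![C_{\mathrm{body}}]\!](I)+[\neg\varphi]\cdot f\ge I$, and (2) $C$ is dPAST, and (3) $C$ is suitable for optional stopping w.r.t. $f$, then $\mathrm{awp}[\![C]\!](f)\ge I$.
   Context: States: fix a countably infinite set of program variables with values in $\mathbb{Q}_{\ge 0}$; a state is a map $\sigma$ from variables to $\mathbb{Q}_{\ge0}$ which is $0$ for all but finitely many variables; $\mathsf{States}$ is the set of states. A predicate is a map $\varphi:\mathsf{States}\to\{\mathsf{true},\mathsf{false}\}$. Expectations: $\mathbb{E}$ is the set of maps $\mathsf{States}\to[0,\infty]$, ordered pointwise ($\le,\ge$); $+,\cdot$ pointwise with $0\cdot\infty=0$; $\sqcap,\sqcup$ pointwise min/max; $[\varphi]$ Iverson bracket; $(\varphi\to g)(\sigma)=g(\sigma)$ if $\sigma\models\varphi$, else $\infty$; $f[x/E](\sigma)=f(\sigma[x\mapsto E(\sigma)])$. Programs of $\mathsf{pGCL}$: $C ::= \mathtt{skip} \mid x:=E \mid C;C \mid \mathtt{if}\ \varphi_1\to C\ \square\ \varphi_2\to C \mid \{C\}[p]\{C\} \mid \mathtt{while}(\varphi)\{C\}[I]$, where $E:\mathsf{States}\to\mathbb{Q}_{\ge0}$, $p:\mathsf{States}\to[0,1]$, in every guarded choice $\varphi_1\vee\varphi_2$ is valid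 (when both hold the choice is nondeterministic), and every loop carries an invariant annotation $I\in\mathbb{E}$. Weakest preexpectations for $\mathcal{T}\in\{\mathrm{dwp},\mathrm{awp}\}$: $\mathcal{T}[\![\mathtt{skip}]\!](f)=f$; $\mathcal{T}[\![x:=E]\!](f)=f[x/E]$; $\mathcal{T}[\![C_1;C_2]\!](f)=\mathcal{T}[\![C_1]\!](\mathcal{T}[\![C_2]\!](f))$; $\mathrm{dwp}$ of a guarded choice: $(\varphi_1\to\mathrm{dwp}[\![C_1]\!](f))\sqcap(\varphi_2\to\mathrm{dwp}[\![C_2]\!](f))$; $\mathrm{awp}$ of a guarded choice: $[\varphi_1]\cdot\mathrm{awp}[\![C_1]\!](f)\sqcup[\varphi_2]\cdot\mathrm{awp}[\![C_2]\!](f)$; $\mathcal{T}[\![\{C_1\}[p]\{C_2\}]\!](f)=p\cdot\mathcal{T}[\![C_1]\!](f)+(1-p)\cdot\mathcal{T}[\![C_2]\!](f)$; loops: least fixpoint of $g\mapsto[\neg\varphi]\cdot f+[\varphi]\cdot\mathcal{T}[\![C']\!](g)$. $C$ is dPAST (positively demonically almost-surely terminating) if its expected runtime (in the sense of the expected-runtime calculus of Kaminski et al., resolving nondeterminism in the worst case) is finite for all initial states. A loop $\mathtt{while}(\varphi)\{C_{\mathrm{body}}\}[I]$ is suitable for optional stopping w.r.t. $f$ if (i) $I=[\varphi]\cdot I'+[\neg\varphi]\cdot f$ for some $I'\in\mathbb{E}$, (ii) $f$, $I$ and $[\varphi]\cdot\mathrm{awp}[\![C_{\mathrm{body}}]\!](I)+[\neg\varphi]\cdot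 f$ are all pointwise $<\infty$, and (iii) there is $b\in\mathbb{R}_{\ge0}$ such that for all states $\sigma$, $([\varphi]\cdot\mathrm{awp}[\![C_{\mathrm{body}}]\!](\lambda\tau.|I(\tau)-I(\sigma)|))(\sigma)\le b$. *)

theory Defs
  imports Complex_Main "HOL-Library.Extended_Nonnegative_Real"
begin

typedef state = "{\<sigma> :: nat \<Rightarrow> rat. (\<forall>x. 0 \<le> \<sigma> x) \<and> finite {x. \<sigma> x \<noteq> 0}}"
  by (rule exI[of _ "\<lambda>_. 0"]) simp

type_synonym pred = "state \<Rightarrow> bool"
type_synonym expectation = "state \<Rightarrow> ennreal"

text \<open>State update \<open>\<sigma>[x \<mapsto> v]\<close> (meaningful for \<open>v \<ge> 0\<close>).\<close>
definition upd :: "state \<Rightarrow> nat \<Rightarrow> rat \<Rightarrow> state" where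
  "upd \<sigma> x v = Abs_state ((Rep_state \<sigma>)(x := v))"

definition iv :: "pred \<Rightarrow> expectation" where
  "iv \<phi> = (\<lambda>\<sigma>. if \<phi> \<sigma> then 1 else 0)"

definition guard_to :: "pred \<Rightarrow> expectation \<Rightarrow> expectation" where
  "guard_to \<phi> g = (\<lambda>\<sigma>. if \<phi> \<sigma> then g \<sigma> else \<infinity>)"

definition subst :: "expectation \<Rightarrow> nat \<Rightarrow> (state \<Rightarrow> rat) \<Rightarrow> expectation" where
  "subst f x E = (\<lambda>\<sigma>. f (upd \<sigma> x (E \<sigma>)))"

datatype pgcl =
    Skip
  | Assign nat "state \<Rightarrow> rat"
  | Seq pgcl pgcl
  | GChoice pred pgcl pred pgcl
  | PChoice pgcl "state \<Rightarrow> real" pgcl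
  | While pred pgcl expectation

fun wf :: "pgcl \<Rightarrow> bool" where
  "wf Skip = True"
| "wf (Assign x E) = (\<forall>\<sigma>. 0 \<le> E \<sigma>)"
| "wf (Seq C1 C2) = (wf C1 \<and> wf C2)"
| "wf (GChoice \<phi>1 C1 \<phi>2 C2) = ((\<forall>\<sigma>. \<phi>1 \<sigma> \<or> \<phi>2 \<sigma>) \<and> wf C1 \<and> wf C2)"
| "wf (PChoice C1 p C2) = ((\<forall>\<sigma>. 0 \<le> p \<sigma> \<and> p \<sigma> \<le> 1) \<and> wf C1 \<and> wf C2)"
| "wf (While \<phi> C I) = wf C"

fun loop_free :: "pgcl \<Rightarrow> bool" where
  "loop_free Skip = True"
| "loop_free (Assign x E) = True"
| "loop_free (Seq C1 C2) = (loop_free C1 \<and> loop_free C2)"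
| "loop_free (GChoice \<phi>1 C1 \<phi>2 C2) = (loop_free C1 \<and> loop_free C2)"
| "loop_free (PChoice C1 p C2) = (loop_free C1 \<and> loop_free C2)"
| "loop_free (While \<phi> C I) = False"

primrec dwp :: "pgcl \<Rightarrow> expectation \<Rightarrow> expectation" where
  "dwp Skip f = f"
| "dwp (Assign x E) f = subst f x E"
| "dwp (Seq C1 C2) f = dwp C1 (dwp C2 f)"
| "dwp (GChoice \<phi>1 C1 \<phi>2 C2) f =
     (\<lambda>\<sigma>. min (guard_to \<phi>1 (dwp C1 f) \<sigma>) (guard_to \<phi>2 (dwp C2 f) \<sigma>))"
| "dwp (PChoice C1 p C2) f =
     (\<lambda>\<sigma>. ennreal (p \<sigma>) * dwp C1 f \<sigma> + ennreal (1 - p \<sigma>) * dwp C2 f \<sigma>)"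
| "dwp (While \<phi> C I) f = lfp (\<lambda>g \<sigma>. iv (\<lambda>s. \<not> \<phi> s) \<sigma> * f \<sigma> + iv \<phi> \<sigma> * dwp C g \<sigma>)"

primrec awp :: "pgcl \<Rightarrow> expectation \<Rightarrow> expectation" where
  "awp Skip f = f"
| "awp (Assign x E) f = subst f x E"
| "awp (Seq C1 C2) f = awp C1 (awp C2 f)"
| "awp (GChoice \<phi>1 C1 \<phi>2 C2) f =
     (\<lambda>\<sigma>. max (iv \<phi>1 \<sigma> * awp C1 f \<sigma>) (iv \<phi>2 \<sigma> * awp C2 f \<sigma>))"
| "awp (PChoice C1 p C2) f =
     (\<lambda>\<sigma>. ennreal (p \<sigma>) * awp C1 f \<sigma> + ennreal (1 - p \<sigma>) * awp C2 f \<sigma>)"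
| "awp (While \<phi> C I) f = lfp (\<lambda>g \<sigma>. iv (\<lambda>s. \<not> \<phi> s) \<sigma> * f \<sigma> + iv \<phi> \<sigma> * awp C g \<sigma>)"

primrec ert :: "pgcl \<Rightarrow> expectation \<Rightarrow> expectation" where
  "ert Skip t = (\<lambda>\<sigma>. 1 + t \<sigma>)"
| "ert (Assign x E) t = (\<lambda>\<sigma>. 1 + subst t x E \<sigma>)"
| "ert (Seq C1 C2) t = ert C1 (ert C2 t)"
| "ert (GChoice \<phi>1 C1 \<phi>2 C2) t =
     (\<lambda>\<sigma>. 1 + max (iv \<phi>1 \<sigma> * ert C1 t \<sigma>) (iv \<phi>2 \<sigma> * ert C2 t \<sigma>))"
| "ert (PChoice C1 p C2) t =
     (\<lambda>\<sigma>. 1 + ennreal (p \<sigma>) * ert C1 t \<sigma> + ennreal (1 - p \<sigma>) * ert C2 t \<sigma>)"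
| "ert (While \<phi> C I) t =
     lfp (\<lambda>X \<sigma>. 1 + iv (\<lambda>s. \<not> \<phi> s) \<sigma> * t \<sigma> + iv \<phi> \<sigma> * ert C X \<sigma>)"

definition dPAST :: "pgcl \<Rightarrow> bool" where
  "dPAST C \<longleftrightarrow> (\<forall>\<sigma>. ert C (\<lambda>_. 0) \<sigma> < \<infinity>)"

definition suitable_OST :: "pgcl \<Rightarrow> expectation \<Rightarrow> bool" where
  "suitable_OST C f \<longleftrightarrow> (case C of
     While \<phi> Cb I \<Rightarrow>
       (\<exists>I'. I = (\<lambda>\<sigma>. iv \<phi> \<sigma> * I' \<sigma> + iv (\<lambda>s. \<not> \<phi> s) \<sigma> * f \<sigma>))
     \<and> (\<forall>\<sigma>. f \<sigma> < \<infinity>) \<and> (\<forall>\<sigma>. I \<sigma> < \<infinity>)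
     \<and> (\<forall>\<sigma>. iv \<phi> \<sigma> * awp Cb I \<sigma> + iv (\<lambda>s. \<not> \<phi> s) \<sigma> * f \<sigma> < \<infinity>)
     \<and> (\<exists>b::real. 0 \<le> b \<and> (\<forall>\<sigma>.
          iv \<phi> \<sigma> * awp Cb (\<lambda>\<tau>. ennreal \<bar>enn2real (I \<tau>) - enn2real (I \<sigma>)\<bar>) \<sigma> \<le> ennreal b))
   | _ \<Rightarrow> False)"

end

theory Submission
  imports Defs "HOL-Analysis.Uniform_Limit" "HOL-Analysis.Measure_Space"
begin

text \<open>Resolve every nondeterministic choice of the loop body as the angelic weakest
  preexpectation of \<open>I\<close> resolves it. The guarded body then acts as a finite sub-stochastic
  kernel \<open>L\<close> with \<open>L I = [\<phi>] \<cdot> awp Cb I\<close>, so hypothesis (1) unrolls to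
  \<open>I \<le> awp C f + L\<^sup>n I\<close> for every \<open>n\<close>, and it remains to show \<open>L\<^sup>n I \<rightarrow> 0\<close> pointwise.
  The survival probabilities \<open>u\<^sub>k = L\<^sup>k 1\<close> sum to at most the expected runtime, which is
  finite by dPAST. Comparing \<open>I\<close> along a run with its initial value bounds \<open>L\<^sup>n I \<sigma>\<close> by
  \<open>I \<sigma> \<cdot> u\<^sub>n \<sigma>\<close> plus a sum whose \<open>k\<close>-th term is at most \<open>b \<cdot> u\<^sub>k \<sigma>\<close> by the bounded
  increments and tends to 0 as \<open>n \<rightarrow> \<infinity>\<close>; Tannery's theorem passes the limit through the sum.\<close>

lemma summable_enn2real_if_sums_bounded:
  fixes a :: "nat \<Rightarrow> ennreal"
  assumes bounded: "\<And>n. (\<Sum>k<n. a k) \<le> B" and "B < top"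
  shows "summable (\<lambda>k. enn2real (a k))"
proof (rule summableI_nonneg_bounded)
  have "a k \<le> (\<Sum>i<Suc k. a i)" for k by (rule member_le_sum) auto
  then have finite: "a k < top" for k using bounded \<open>B < top\<close> by (meson le_less_trans)
  show "(\<Sum>k<n. enn2real (a k)) \<le> enn2real B" for n
  proof -
    have "(\<Sum>k<n. enn2real (a k)) = enn2real (\<Sum>k<n. a k)" using finite by (simp add: enn2real_sum)
    also have "\<dots> \<le> enn2real B" using bounded \<open>B < top\<close> by (intro enn2real_mono) auto
    finally show ?thesis .
  qed
qed simp

lemma tendsto_sum_shifted_zero:
  fixes a :: "nat \<Rightarrow> nat \<Rightarrow> ennreal" and c :: "nat \<Rightarrow> real"
  assumes bound: "\<And>k m. a k m \<le> ennreal (c k)" and nonneg: "\<And>k. 0 \<le> c k" and "summable c"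
    and lim: "\<And>k. (\<lambda>m. a k m) \<longlonglongrightarrow> 0"
  shows "(\<lambda>n. \<Sum>k<n. a k (n - Suc k)) \<longlonglongrightarrow> 0"
proof -
  define r where "r k n = enn2real (if k < n then a k (n - Suc k) else 0)" for k n
  have finite: "a k m < top" for k m
    using bound[of k m] by (simp add: le_less_trans)
  have "(\<lambda>n. \<Sum>k. r k n) \<longlonglongrightarrow> (\<Sum>k. 0 :: real)"
  proof -
    have "(\<lambda>n. r k n) \<longlonglongrightarrow> 0" for k
    proof -
      have "(\<lambda>m. enn2real (a k m)) \<longlonglongrightarrow> 0"
        using lim[of k] by (intro tendsto_enn2real) simp_all
      then have "(\<lambda>n. r k (n + Suc k)) \<longlonglongrightarrow> 0" by (simp add: r_def)
      then show ?thesis by (rule LIMSEQ_offset)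
    qed
    moreover have "\<forall>\<^sub>F (k, n) in sequentially \<times>\<^sub>F sequentially. norm (r k n) \<le> c k"
    proof (intro always_eventually allI, clarify)
      fix k n
      show "norm (r k n) \<le> c k"
        using bound[of k "n - Suc k"] nonneg[of k] finite by (auto simp: r_def enn2real_leI)
    qed
    ultimately show ?thesis
      using tannerys_theorem[of r "\<lambda>_. 0" sequentially c] \<open>summable c\<close> by simp
  qed
  moreover have "(\<Sum>k. r k n) = enn2real (\<Sum>k<n. a k (n - Suc k))" for n
  proof -
    have "(\<Sum>k. r k n) = (\<Sum>k<n. r k n)" by (rule suminf_finite) (auto simp: r_def)
    then show ?thesis using finite by (simp add: r_def enn2real_sum)
  qed
  ultimately have "(\<lambda>n. ennreal (enn2real (\<Sum>k<n. a k (n - Suc k)))) \<longlonglongrightarrow> ennreal 0"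
    by (intro tendsto_ennrealI) simp
  then show ?thesis using finite by (simp add: ennreal_enn2real)
qed

lemma ennreal_tendsto_zero_if_summable_enn2real:
  fixes a :: "nat \<Rightarrow> ennreal"
  assumes "summable (\<lambda>k. enn2real (a k))" and "\<And>k. a k < top"
  shows "a \<longlonglongrightarrow> 0"
proof -
  have "(\<lambda>k. ennreal (enn2real (a k))) \<longlonglongrightarrow> ennreal 0"
    using summable_LIMSEQ_zero[OF assms(1)] by (rule tendsto_ennrealI)
  then show ?thesis using assms(2) by (simp add: ennreal_enn2real)
qed

lemma sum_extend_support:
  fixes w :: "'a \<Rightarrow> 'b::semiring_0"
  assumes "finite T" "S \<subseteq> T" "\<And>y. y \<notin> S \<Longrightarrow> w y = 0"
  shows "(\<Sum>y\<in>S. w y * g y) = (\<Sum>y\<in>T. w y * g y)"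
  using assms by (intro sum.mono_neutral_left) auto

definition finite_kernel :: "(('a \<Rightarrow> ennreal) \<Rightarrow> 'a \<Rightarrow> ennreal) \<Rightarrow> bool" where
  "finite_kernel L \<longleftrightarrow> (\<forall>x. \<exists>S w. finite S \<and> (\<forall>y. w y < top) \<and> (\<forall>y. y \<notin> S \<longrightarrow> w y = 0)
     \<and> (\<forall>g. L g x = (\<Sum>y\<in>S. w y * g y)))"

lemma finite_kernelE:
  assumes "finite_kernel L"
  obtains S w where "finite S" "\<And>y. w y < top" "\<And>y. y \<notin> S \<Longrightarrow> w y = 0"
    "\<And>g. L g x = (\<Sum>y\<in>S. w y * g y)"
  using assms unfolding finite_kernel_def by metis

lemma finite_kernel_precompose: "finite_kernel (\<lambda>g x. g (h x))"
  unfolding finite_kernel_def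
  by (intro allI exI[of _ "{h _}"] exI[of _ "\<lambda>y. if y = h _ then 1 else 0"]) auto

lemma finite_kernel_id: "finite_kernel (\<lambda>g. g)"
  using finite_kernel_precompose[of "\<lambda>x. x"] by simp

lemma finite_kernel_compose:
  assumes L: "finite_kernel L" and M: "finite_kernel M"
  shows "finite_kernel (\<lambda>g. L (M g))"
  unfolding finite_kernel_def
proof
  fix x
  obtain S w where S: "finite S" "\<And>y. w y < top" "\<And>g. L g x = (\<Sum>y\<in>S. w y * g y)"
    using L unfolding finite_kernel_def by blast
  obtain T v where T: "\<And>y. finite (T y)" "\<And>y z. v y z < top" "\<And>y z. z \<notin> T y \<Longrightarrow> v y z = 0"
    "\<And>y g. M g y = (\<Sum>z\<in>T y. v y z * g z)"
    using M unfolding finite_kernel_def by metis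
  define U where "U = (\<Union>y\<in>S. T y)"
  have "finite U" using S(1) T(1) by (simp add: U_def)
  show "\<exists>U u. finite U \<and> (\<forall>z. u z < top) \<and> (\<forall>z. z \<notin> U \<longrightarrow> u z = 0)
      \<and> (\<forall>g. L (M g) x = (\<Sum>z\<in>U. u z * g z))"
  proof (intro exI conjI allI impI)
    show "finite U" by fact
    show "(\<Sum>y\<in>S. w y * v y z) < top" for z
      using S(1,2) T(2) by (simp add: ennreal_mult_less_top)
    show "(\<Sum>y\<in>S. w y * v y z) = 0" if "z \<notin> U" for z
      using that T(3) by (simp add: U_def)
    fix g
    have "L (M g) x = (\<Sum>y\<in>S. w y * (\<Sum>z\<in>U. v y z * g z))"
    proof (simp only: S(3), rule sum.cong[OF refl])
      fix y assume "y \<in> S"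
      then have "T y \<subseteq> U" by (auto simp: U_def)
      then show "w y * M g y = w y * (\<Sum>z\<in>U. v y z * g z)"
        using T(3) \<open>finite U\<close> by (simp add: T(4) sum_extend_support)
    qed
    then show "L (M g) x = (\<Sum>z\<in>U. (\<Sum>y\<in>S. w y * v y z) * g z)"
      by (simp add: sum_distrib_left sum_distrib_right mult.assoc sum.swap[of _ S])
  qed
qed

lemma finite_kernel_funpow: "finite_kernel L \<Longrightarrow> finite_kernel (L ^^ n)"
  by (induction n) (simp_all add: finite_kernel_id finite_kernel_compose comp_def id_def)

lemma finite_kernel_add:
  assumes L: "finite_kernel L" and M: "finite_kernel M"
  shows "finite_kernel (\<lambda>g x. L g x + M g x)"
  unfolding finite_kernel_def
proof
  fix x
  obtain S w where S: "finite S" "\<And>y. w y < top" "\<And>y. y \<notin> S \<Longrightarrow> w y = 0"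
    "\<And>g. L g x = (\<Sum>y\<in>S. w y * g y)"
    using L unfolding finite_kernel_def by blast
  obtain T v where T: "finite T" "\<And>y. v y < top" "\<And>y. y \<notin> T \<Longrightarrow> v y = 0"
    "\<And>g. M g x = (\<Sum>y\<in>T. v y * g y)"
    using M unfolding finite_kernel_def by blast
  have "L g x + M g x = (\<Sum>y\<in>S \<union> T. (w y + v y) * g y)" for g
    using S T by (simp add: sum_extend_support[of "S \<union> T" S] sum_extend_support[of "S \<union> T" T]
        distrib_right sum.distrib)
  then show "\<exists>U u. finite U \<and> (\<forall>y. u y < top) \<and> (\<forall>y. y \<notin> U \<longrightarrow> u y = 0)
      \<and> (\<forall>g. L g x + M g x = (\<Sum>y\<in>U. u y * g y))"
    using S T by (intro exI[of _ "S \<union> T"] exI[of _ "\<lambda>y. w y + v y"]) auto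
qed

lemma finite_kernel_cmult:
  assumes "finite_kernel L" and "\<And>x. c x < top"
  shows "finite_kernel (\<lambda>g x. c x * L g x)"
  unfolding finite_kernel_def
proof
  fix x
  obtain S w where S: "finite S" "\<And>y. w y < top" "\<And>y. y \<notin> S \<Longrightarrow> w y = 0"
    "\<And>g. L g x = (\<Sum>y\<in>S. w y * g y)"
    using assms(1) unfolding finite_kernel_def by blast
  then show "\<exists>S w. finite S \<and> (\<forall>y. w y < top) \<and> (\<forall>y. y \<notin> S \<longrightarrow> w y = 0)
      \<and> (\<forall>g. c x * L g x = (\<Sum>y\<in>S. w y * g y))"
    using assms(2)
    by (intro exI[of _ S] exI[of _ "\<lambda>y. c x * w y"])
       (auto simp: sum_distrib_left mult.assoc ennreal_mult_less_top)
qed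

lemma finite_kernel_if:
  assumes "finite_kernel L" and "finite_kernel M"
  shows "finite_kernel (\<lambda>g x. if P x then L g x else M g x)"
  unfolding finite_kernel_def
proof
  fix x
  show "\<exists>S w. finite S \<and> (\<forall>y. w y < top) \<and> (\<forall>y. y \<notin> S \<longrightarrow> w y = 0)
      \<and> (\<forall>g. (if P x then L g x else M g x) = (\<Sum>y\<in>S. w y * g y))"
    using assms unfolding finite_kernel_def by (cases "P x") simp_all
qed

lemma finite_kernel_apply_mono:
  assumes "finite_kernel L" and "\<And>y. g y \<le> h y"
  shows "L g x \<le> L h x"
  using assms(1) by (rule finite_kernelE[where x = x]) (auto intro!: sum_mono mult_left_mono assms(2))

lemma finite_kernel_apply_add:
  assumes "finite_kernel L"
  shows "L (\<lambda>y. g y + h y) x = L g x + L h x"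
  using assms by (rule finite_kernelE[where x = x]) (simp add: distrib_left sum.distrib)

lemma finite_kernel_apply_sum:
  assumes "finite_kernel L"
  shows "L (\<lambda>y. \<Sum>i\<in>A. g i y) x = (\<Sum>i\<in>A. L (g i) x)"
  using assms by (rule finite_kernelE[where x = x]) (simp add: sum_distrib_left sum.swap[of _ A])

lemma finite_kernel_apply_cmult:
  assumes "finite_kernel L"
  shows "L (\<lambda>y. c * g y) x = c * L g x"
  using assms by (rule finite_kernelE[where x = x]) (simp add: sum_distrib_left mult.left_commute)

lemma finite_kernel_apply_tendsto_zero:
  assumes "finite_kernel L" and "\<And>y. (\<lambda>m. g m y) \<longlonglongrightarrow> 0"
  shows "(\<lambda>m. L (g m) x) \<longlonglongrightarrow> 0"
proof -
  obtain S w where w: "\<And>y. w y < top" "\<And>g. L g x = (\<Sum>y\<in>S. w y * g y)"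
    using assms(1) unfolding finite_kernel_def by blast
  have "(\<lambda>m. \<Sum>y\<in>S. w y * g m y) \<longlonglongrightarrow> (\<Sum>y\<in>S. w y * 0)"
    by (intro tendsto_sum ennreal_tendsto_cmult assms(2) w(1))
  then show ?thesis by (simp add: w(2))
qed

lemma finite_kernel_invariant_le:
  assumes L: "finite_kernel L" and invariant: "\<And>x. I x \<le> c x + L I x"
    and prefixpoint: "\<And>x. c x + L F x \<le> F x"
  shows "I x \<le> F x + (L ^^ n) I x"
proof (induction n arbitrary: x)
  case (Suc n)
  have "I x \<le> c x + L (\<lambda>y. F y + (L ^^ n) I y) x"
    using invariant[of x] finite_kernel_apply_mono[OF L Suc.IH] by (meson add_left_mono order_trans)
  also have "\<dots> = (c x + L F x) + (L ^^ Suc n) I x"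
    by (simp add: finite_kernel_apply_add[OF L] add.assoc)
  also have "\<dots> \<le> F x + (L ^^ Suc n) I x"
    using prefixpoint by (rule add_right_mono)
  finally show ?case .
qed (simp add: add_increasing)

lemma finite_kernel_funpow_le_one:
  assumes L: "finite_kernel L" and sub_stochastic: "\<And>x. L (\<lambda>_. 1) x \<le> 1"
  shows "(L ^^ n) (\<lambda>_. 1) x \<le> 1"
proof (induction n arbitrary: x)
  case (Suc n)
  have "(L ^^ Suc n) (\<lambda>_. 1) x \<le> L (\<lambda>_. 1) x"
    using Suc.IH by (simp add: finite_kernel_apply_mono[OF L])
  then show ?case using sub_stochastic order_trans by blast
qed simp

lemma finite_kernel_funpow_sum_le:
  assumes L: "finite_kernel L" and super_fixpoint: "\<And>x. 1 + L R x \<le> R x"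
  shows "(\<Sum>k<n. (L ^^ k) (\<lambda>_. 1) x) \<le> R x"
proof (induction n arbitrary: x)
  case (Suc n)
  have "(\<Sum>k<Suc n. (L ^^ k) (\<lambda>_. 1) x) = 1 + L (\<lambda>y. \<Sum>k<n. (L ^^ k) (\<lambda>_. 1) y) x"
    by (subst sum.lessThan_Suc_shift) (simp add: finite_kernel_apply_sum[OF L])
  also have "\<dots> \<le> 1 + L R x"
    by (intro add_left_mono finite_kernel_apply_mono[OF L] Suc.IH)
  also have "\<dots> \<le> R x" by (rule super_fixpoint)
  finally show ?case .
qed simp

text \<open>Telescoping \<open>I\<close> along the first \<open>n\<close> steps: the \<open>k\<close>-th summand bounds the increment of
  step \<open>k + 1\<close>, weighted by the probability of surviving the remaining \<open>n - k - 1\<close> steps.\<close>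

lemma finite_kernel_funpow_drift_le:
  assumes L: "finite_kernel L" and drift: "\<And>x y. I y \<le> I x + D x y"
  shows "(L ^^ n) I x \<le> I x * (L ^^ n) (\<lambda>_. 1) x
           + (\<Sum>k<n. (L ^^ k) (\<lambda>y. L (\<lambda>z. D y z * (L ^^ (n - Suc k)) (\<lambda>_. 1) z) y) x)"
    (is "_ \<le> _ + ?A n x")
proof (induction n arbitrary: x)
  case (Suc n)
  let ?u = "(L ^^ n) (\<lambda>_. 1)"
  have "L (\<lambda>y. I y * ?u y) x \<le> L (\<lambda>y. I x * ?u y + D x y * ?u y) x"
    by (intro finite_kernel_apply_mono[OF L]) (metis drift distrib_right mult_right_mono zero_le)
  also have "\<dots> = I x * (L ^^ Suc n) (\<lambda>_. 1) x + L (\<lambda>z. D x z * ?u z) x"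
    by (simp add: finite_kernel_apply_add[OF L] finite_kernel_apply_cmult[OF L])
  finally have main: "L (\<lambda>y. I y * ?u y) x \<le> I x * (L ^^ Suc n) (\<lambda>_. 1) x + L (\<lambda>z. D x z * ?u z) x" .
  have "(L ^^ Suc n) I x \<le> L (\<lambda>y. I y * ?u y + ?A n y) x"
    using Suc.IH by (simp add: finite_kernel_apply_mono[OF L])
  also have "\<dots> = L (\<lambda>y. I y * ?u y) x + L (?A n) x" by (rule finite_kernel_apply_add[OF L])
  also have "\<dots> \<le> I x * (L ^^ Suc n) (\<lambda>_. 1) x + (L (\<lambda>z. D x z * ?u z) x + L (?A n) x)"
    using main by (simp add: add.assoc add_right_mono)
  also have "L (\<lambda>z. D x z * ?u z) x + L (?A n) x = ?A (Suc n) x"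
    by (subst sum.lessThan_Suc_shift) (simp add: finite_kernel_apply_sum[OF L])
  finally show ?case .
qed simp

lemma finite_kernel_drift_remainder_tendsto_zero:
  assumes L: "finite_kernel L" and sub_stochastic: "\<And>x. L (\<lambda>_. 1) x \<le> 1"
    and summable: "\<And>y. summable (\<lambda>k. enn2real ((L ^^ k) (\<lambda>_. 1) y))"
    and D_finite: "\<And>y z. D y z < top" and D_bound: "\<And>y. L (D y) y \<le> ennreal b" and "0 \<le> b"
  shows "(\<lambda>n. \<Sum>k<n. (L ^^ k) (\<lambda>y. L (\<lambda>z. D y z * (L ^^ (n - Suc k)) (\<lambda>_. 1) z) y) x) \<longlonglongrightarrow> 0"
proof -
  define u where "u k = (L ^^ k) (\<lambda>_. 1)" for k
  have u_le_1: "u k y \<le> 1" for k y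
    unfolding u_def using L sub_stochastic by (rule finite_kernel_funpow_le_one)
  then have u_finite: "u k y < top" for k y
    by (meson ennreal_one_less_top le_less_trans)
  have bound: "(L ^^ k) (\<lambda>y. L (\<lambda>z. D y z * u m z) y) x \<le> ennreal (b * enn2real (u k x))" for k m
  proof -
    have "L (\<lambda>z. D y z * u m z) y \<le> ennreal b * 1" for y
    proof -
      have "L (\<lambda>z. D y z * u m z) y \<le> L (D y) y"
        using mult_left_mono[OF u_le_1, of "D y _" m] by (intro finite_kernel_apply_mono[OF L]) simp
      then show ?thesis using D_bound[of y] by simp
    qed
    then have "(L ^^ k) (\<lambda>y. L (\<lambda>z. D y z * u m z) y) x \<le> (L ^^ k) (\<lambda>_. ennreal b * 1) x"
      by (intro finite_kernel_apply_mono[OF finite_kernel_funpow[OF L]])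
    also have "\<dots> = ennreal (b * enn2real (u k x))"
      using finite_kernel_apply_cmult[OF finite_kernel_funpow[OF L], where c = "ennreal b" and g = "\<lambda>_. 1"]
        u_finite \<open>0 \<le> b\<close>
      by (simp add: u_def ennreal_mult ennreal_enn2real)
    finally show ?thesis .
  qed
  have "(\<lambda>m. D y z * u m z) \<longlonglongrightarrow> 0" for y z
    using ennreal_tendsto_cmult[OF D_finite ennreal_tendsto_zero_if_summable_enn2real]
      summable u_finite by (simp add: u_def)
  then have lim: "(\<lambda>m. (L ^^ k) (\<lambda>y. L (\<lambda>z. D y z * u m z) y) x) \<longlonglongrightarrow> 0" for k
    by (intro finite_kernel_apply_tendsto_zero[OF finite_kernel_funpow[OF L]]
        finite_kernel_apply_tendsto_zero[OF L])
  have "(\<lambda>n. \<Sum>k<n. (L ^^ k) (\<lambda>y. L (\<lambda>z. D y z * u (n - Suc k) z) y) x) \<longlonglongrightarrow> 0"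
    using bound _ summable_mult[OF summable[unfolded u_def[symmetric]]] lim
    by (rule tendsto_sum_shifted_zero[where a = "\<lambda>k m. (L ^^ k) (\<lambda>y. L (\<lambda>z. D y z * u m z) y) x"])
       (simp add: \<open>0 \<le> b\<close>)
  then show ?thesis by (simp add: u_def)
qed

lemma finite_kernel_optional_stopping:
  assumes L: "finite_kernel L" and sub_stochastic: "\<And>x. L (\<lambda>_. 1) x \<le> 1"
    and runtime: "\<And>x. 1 + L R x \<le> R x" "\<And>x. R x < top"
    and I_finite: "\<And>x. I x < top"
    and bounded_increments: "\<And>x. L (\<lambda>y. ennreal \<bar>enn2real (I y) - enn2real (I x)\<bar>) x \<le> ennreal b"
    and "0 \<le> b"
  shows "(\<lambda>n. (L ^^ n) I x) \<longlonglongrightarrow> 0"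
proof -
  define D where "D = (\<lambda>x y. ennreal \<bar>enn2real (I y) - enn2real (I x)\<bar>)"
  have drift: "I y \<le> I x + D x y" for x y
  proof -
    have "ennreal (enn2real (I y)) \<le> ennreal (enn2real (I x) + \<bar>enn2real (I y) - enn2real (I x)\<bar>)"
      by (intro ennreal_leI) auto
    then show ?thesis using I_finite unfolding D_def by (simp add: ennreal_enn2real ennreal_plus)
  qed
  have D_finite: "D y z < top" for y z by (simp add: D_def)
  have D_bound: "L (D y) y \<le> ennreal b" for y using bounded_increments[of y] by (simp add: D_def)
  have summable: "summable (\<lambda>k. enn2real ((L ^^ k) (\<lambda>_. 1) y))" for y
    using finite_kernel_funpow_sum_le[OF L runtime(1)] runtime(2)
    by (rule summable_enn2real_if_sums_bounded)
  have survival_lim: "(\<lambda>n. (L ^^ n) (\<lambda>_. 1) x) \<longlonglongrightarrow> 0"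
  proof (rule ennreal_tendsto_zero_if_summable_enn2real[OF summable])
    show "(L ^^ k) (\<lambda>_. 1) x < top" for k
      using finite_kernel_funpow_le_one[OF L sub_stochastic, of k x]
      by (metis ennreal_one_less_top le_less_trans)
  qed
  have survival_part: "(\<lambda>n. I x * (L ^^ n) (\<lambda>_. 1) x) \<longlonglongrightarrow> 0"
    using ennreal_tendsto_cmult[OF I_finite survival_lim] by simp
  have remainder_part:
    "(\<lambda>n. \<Sum>k<n. (L ^^ k) (\<lambda>y. L (\<lambda>z. D y z * (L ^^ (n - Suc k)) (\<lambda>_. 1) z) y) x) \<longlonglongrightarrow> 0"
    using L sub_stochastic summable D_finite D_bound \<open>0 \<le> b\<close>
    by (rule finite_kernel_drift_remainder_tendsto_zero[where D = D])
  from tendsto_add[OF survival_part remainder_part]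
  have bound_lim: "(\<lambda>n. I x * (L ^^ n) (\<lambda>_. 1) x
        + (\<Sum>k<n. (L ^^ k) (\<lambda>y. L (\<lambda>z. D y z * (L ^^ (n - Suc k)) (\<lambda>_. 1) z) y) x)) \<longlonglongrightarrow> 0"
    by simp
  have "(L ^^ n) I x \<le> I x * (L ^^ n) (\<lambda>_. 1) x
        + (\<Sum>k<n. (L ^^ k) (\<lambda>y. L (\<lambda>z. D y z * (L ^^ (n - Suc k)) (\<lambda>_. 1) z) y) x)" for n
    by (rule finite_kernel_funpow_drift_le[OF L drift])
  then show ?thesis
    by (intro tendsto_sandwich[OF _ _ tendsto_const bound_lim] always_eventually allI) simp_all
qed

lemma awp_mono: "g \<le> h \<Longrightarrow> awp Q g \<le> awp Q h"
proof (induction Q arbitrary: g h)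
  case (GChoice \<phi>1 C1 \<phi>2 C2)
  show ?case
  proof (rule le_funI)
    fix \<sigma>
    have le1: "awp C1 g \<sigma> \<le> awp C1 h \<sigma>" and le2: "awp C2 g \<sigma> \<le> awp C2 h \<sigma>"
      using GChoice by (simp_all add: le_funD)
    then show "awp (GChoice \<phi>1 C1 \<phi>2 C2) g \<sigma> \<le> awp (GChoice \<phi>1 C1 \<phi>2 C2) h \<sigma>"
      by (simp only: awp.simps) (intro max.mono mult_left_mono le1 le2 zero_le)
  qed
next
  case (PChoice C1 p C2)
  then show ?case by (auto simp: le_fun_def intro!: add_mono mult_left_mono)
next
  case (While \<phi> C J)
  show ?case unfolding awp.simps
    by (intro lfp_mono le_funI add_right_mono mult_left_mono le_funD[OF While.prems] zero_le)
qed (auto simp: le_fun_def subst_def)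

lemma ert_mono: "g \<le> h \<Longrightarrow> ert Q g \<le> ert Q h"
proof (induction Q arbitrary: g h)
  case (GChoice \<phi>1 C1 \<phi>2 C2)
  show ?case
  proof (rule le_funI)
    fix \<sigma>
    have le1: "ert C1 g \<sigma> \<le> ert C1 h \<sigma>" and le2: "ert C2 g \<sigma> \<le> ert C2 h \<sigma>"
      using GChoice by (simp_all add: le_funD)
    then show "ert (GChoice \<phi>1 C1 \<phi>2 C2) g \<sigma> \<le> ert (GChoice \<phi>1 C1 \<phi>2 C2) h \<sigma>"
      by (simp only: ert.simps) (intro add_left_mono max.mono mult_left_mono le1 le2 zero_le)
  qed
next
  case (PChoice C1 p C2)
  then show ?case by (auto simp: le_fun_def intro!: add_mono mult_left_mono)
next
  case (While \<phi> C J)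
  show ?case unfolding ert.simps
    by (intro lfp_mono le_funI add_right_mono add_left_mono mult_left_mono le_funD[OF While.prems] zero_le)
qed (auto simp: le_fun_def subst_def)

lemma awp_le_ert: "awp Q t \<le> ert Q t"
proof (induction Q arbitrary: t)
  case (Seq C1 C2)
  have "awp C1 (awp C2 t) \<le> awp C1 (ert C2 t)" using Seq.IH(2) by (rule awp_mono)
  also have "\<dots> \<le> ert C1 (ert C2 t)" by (rule Seq.IH(1))
  finally show ?case by simp
next
  case (GChoice \<phi>1 C1 \<phi>2 C2)
  show ?case unfolding awp.simps ert.simps
    by (intro le_funI add_increasing max.mono mult_left_mono zero_le
        le_funD[OF GChoice.IH(1)] le_funD[OF GChoice.IH(2)])
next
  case (PChoice C1 p C2)
  show ?case unfolding awp.simps ert.simps add.assoc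
    by (intro le_funI add_increasing add_mono mult_left_mono zero_le
        le_funD[OF PChoice.IH(1)] le_funD[OF PChoice.IH(2)])
next
  case (While \<phi> C J)
  show ?case unfolding awp.simps ert.simps add.assoc
    by (intro lfp_mono le_funI add_increasing add_mono order_refl mult_left_mono zero_le
        le_funD[OF While.IH])
qed (auto simp: le_fun_def add_increasing)

lemma awp_While_unfold:
  "awp (While \<phi> C J) f \<sigma> = iv (\<lambda>s. \<not> \<phi> s) \<sigma> * f \<sigma> + iv \<phi> \<sigma> * awp C (awp (While \<phi> C J) f) \<sigma>"
proof -
  have "mono (\<lambda>g \<sigma>. iv (\<lambda>s. \<not> \<phi> s) \<sigma> * f \<sigma> + iv \<phi> \<sigma> * awp C g \<sigma>)"
    by (intro monoI le_funI add_left_mono mult_left_mono le_funD[OF awp_mono]) (auto dest: le_funD)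
  from fun_cong[OF lfp_unfold[OF this], of \<sigma>] show ?thesis by simp
qed

lemma ert_While_unfold:
  "ert (While \<phi> C J) t \<sigma> = 1 + iv (\<lambda>s. \<not> \<phi> s) \<sigma> * t \<sigma> + iv \<phi> \<sigma> * ert C (ert (While \<phi> C J) t) \<sigma>"
proof -
  have "mono (\<lambda>X \<sigma>. 1 + iv (\<lambda>s. \<not> \<phi> s) \<sigma> * t \<sigma> + iv \<phi> \<sigma> * ert C X \<sigma>)"
    by (intro monoI le_funI add_left_mono mult_left_mono le_funD[OF ert_mono]) (auto dest: le_funD)
  from fun_cong[OF lfp_unfold[OF this], of \<sigma>] show ?thesis by simp
qed

text \<open>\<open>sched_awp Q I\<close> is \<open>awp Q\<close> under the scheduler that resolves each guarded choice as
  \<open>awp Q I\<close> does; unlike \<open>awp Q\<close> it is linear. The \<open>While\<close> case is a placeholder and only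
  loop-free programs are used.\<close>

primrec sched_awp :: "pgcl \<Rightarrow> expectation \<Rightarrow> expectation \<Rightarrow> expectation" where
  "sched_awp Skip I g = g"
| "sched_awp (Assign x E) I g = subst g x E"
| "sched_awp (Seq C1 C2) I g = sched_awp C1 (awp C2 I) (sched_awp C2 I g)"
| "sched_awp (GChoice \<phi>1 C1 \<phi>2 C2) I g = (\<lambda>\<sigma>.
     if \<phi>1 \<sigma> \<and> (\<phi>2 \<sigma> \<longrightarrow> awp C2 I \<sigma> \<le> awp C1 I \<sigma>) then sched_awp C1 I g \<sigma> else sched_awp C2 I g \<sigma>)"
| "sched_awp (PChoice C1 p C2) I g =
     (\<lambda>\<sigma>. ennreal (p \<sigma>) * sched_awp C1 I g \<sigma> + ennreal (1 - p \<sigma>) * sched_awp C2 I g \<sigma>)"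
| "sched_awp (While \<phi> C J) I g = awp (While \<phi> C J) g"

lemma sched_awp_self: "wf Q \<Longrightarrow> sched_awp Q I I = awp Q I"
proof (induction Q arbitrary: I)
  case (GChoice \<phi>1 C1 \<phi>2 C2)
  then show ?case by (auto simp: fun_eq_iff iv_def max_def)
qed auto

lemma sched_awp_le_awp: "wf Q \<Longrightarrow> sched_awp Q I g \<le> awp Q g"
proof (induction Q arbitrary: I g)
  case (Seq C1 C2)
  then have "sched_awp C1 (awp C2 I) (sched_awp C2 I g) \<le> awp C1 (sched_awp C2 I g)" by simp
  also have "\<dots> \<le> awp C1 (awp C2 g)" using Seq by (simp add: awp_mono)
  finally show ?case by simp
next
  case (GChoice \<phi>1 C1 \<phi>2 C2)
  then show ?case by (auto simp: le_fun_def iv_def le_max_iff_disj)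
next
  case (PChoice C1 p C2)
  then show ?case by (auto simp: le_fun_def intro!: add_mono mult_left_mono)
qed auto

lemma sched_awp_const_one: "wf Q \<Longrightarrow> loop_free Q \<Longrightarrow> sched_awp Q I (\<lambda>_. 1) = (\<lambda>_. 1)"
proof (induction Q arbitrary: I)
  case (Assign x E)
  then show ?case by (simp add: subst_def)
next
  case (PChoice C1 p C2)
  then have "ennreal (p \<sigma>) + ennreal (1 - p \<sigma>) = 1" for \<sigma>
    by (simp flip: ennreal_plus)
  with PChoice show ?case by (simp add: fun_eq_iff)
qed auto

lemma finite_kernel_sched_awp: "loop_free Q \<Longrightarrow> finite_kernel (sched_awp Q I)"
proof (induction Q arbitrary: I)
  case Skip
  have "sched_awp Skip I = (\<lambda>g. g)" by (simp add: fun_eq_iff)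
  then show ?case by (simp add: finite_kernel_id)
next
  case (Assign x E)
  have "sched_awp (Assign x E) I = (\<lambda>g \<sigma>. g (upd \<sigma> x (E \<sigma>)))" by (simp add: fun_eq_iff subst_def)
  then show ?case by (simp add: finite_kernel_precompose)
next
  case (Seq C1 C2)
  have "sched_awp (Seq C1 C2) I = (\<lambda>g. sched_awp C1 (awp C2 I) (sched_awp C2 I g))"
    by (simp add: fun_eq_iff)
  then show ?case using Seq by (simp add: finite_kernel_compose)
next
  case (GChoice \<phi>1 C1 \<phi>2 C2)
  have "sched_awp (GChoice \<phi>1 C1 \<phi>2 C2) I = (\<lambda>g \<sigma>.
      if \<phi>1 \<sigma> \<and> (\<phi>2 \<sigma> \<longrightarrow> awp C2 I \<sigma> \<le> awp C1 I \<sigma>) then sched_awp C1 I g \<sigma> else sched_awp C2 I g \<sigma>)"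
    by (simp add: fun_eq_iff)
  then show ?case using GChoice by (simp add: finite_kernel_if)
next
  case (PChoice C1 p C2)
  have "sched_awp (PChoice C1 p C2) I = (\<lambda>g \<sigma>.
      ennreal (p \<sigma>) * sched_awp C1 I g \<sigma> + ennreal (1 - p \<sigma>) * sched_awp C2 I g \<sigma>)"
    by (simp add: fun_eq_iff)
  then show ?case using PChoice by (simp add: finite_kernel_add finite_kernel_cmult)
qed simp

definition loop_kernel :: "pred \<Rightarrow> pgcl \<Rightarrow> expectation \<Rightarrow> expectation \<Rightarrow> expectation" where
  "loop_kernel \<phi> C I g \<sigma> = iv \<phi> \<sigma> * sched_awp C I g \<sigma>"

lemma finite_kernel_loop_kernel: "loop_free C \<Longrightarrow> finite_kernel (loop_kernel \<phi> C I)"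
  unfolding loop_kernel_def[abs_def]
  by (intro finite_kernel_cmult finite_kernel_sched_awp) (simp_all add: iv_def)

lemma loop_kernel_le_awp: "wf C \<Longrightarrow> loop_kernel \<phi> C I g \<sigma> \<le> iv \<phi> \<sigma> * awp C g \<sigma>"
  unfolding loop_kernel_def by (intro mult_left_mono le_funD[OF sched_awp_le_awp]) simp_all

lemma loop_kernel_const_one_le: "wf C \<Longrightarrow> loop_free C \<Longrightarrow> loop_kernel \<phi> C I (\<lambda>_. 1) \<sigma> \<le> 1"
  by (simp add: loop_kernel_def sched_awp_const_one iv_def)

lemma loop_kernel_ert_le:
  assumes "wf C"
  shows "1 + loop_kernel \<phi> C I (ert (While \<phi> C J) (\<lambda>_. 0)) \<sigma> \<le> ert (While \<phi> C J) (\<lambda>_. 0) \<sigma>"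
proof -
  let ?R = "ert (While \<phi> C J) (\<lambda>_. 0)"
  have "loop_kernel \<phi> C I ?R \<sigma> \<le> iv \<phi> \<sigma> * ert C ?R \<sigma>"
    using loop_kernel_le_awp[OF assms] le_funD[OF awp_le_ert]
    by (meson mult_left_mono order_trans zero_le)
  then show ?thesis by (subst ert_While_unfold) (simp add: add_left_mono)
qed

lemma awp_While_ge_unrolled:
  assumes "wf C" and "loop_free C"
    and invariant: "\<And>\<sigma>. I \<sigma> \<le> iv \<phi> \<sigma> * awp C I \<sigma> + iv (\<lambda>s. \<not> \<phi> s) \<sigma> * f \<sigma>"
  shows "I \<sigma> \<le> awp (While \<phi> C J) f \<sigma> + (loop_kernel \<phi> C I ^^ n) I \<sigma>"
proof (rule finite_kernel_invariant_le[OF finite_kernel_loop_kernel[OF \<open>loop_free C\<close>]])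
  show "I \<sigma> \<le> iv (\<lambda>s. \<not> \<phi> s) \<sigma> * f \<sigma> + loop_kernel \<phi> C I I \<sigma>" for \<sigma>
    using invariant[of \<sigma>] sched_awp_self[OF \<open>wf C\<close>] by (simp add: loop_kernel_def add.commute)
  show "iv (\<lambda>s. \<not> \<phi> s) \<sigma> * f \<sigma> + loop_kernel \<phi> C I (awp (While \<phi> C J) f) \<sigma>
      \<le> awp (While \<phi> C J) f \<sigma>" for \<sigma>
    using loop_kernel_le_awp[OF \<open>wf C\<close>] by (subst awp_While_unfold) (rule add_left_mono)
qed

theorem theorem6p10:
  fixes \<phi> :: pred and Cb :: pgcl and I f :: expectation
  assumes wf: "wf (While \<phi> Cb I)"
    and lf: "loop_free Cb"
    and h1: "\<forall>\<sigma>. I \<sigma> \<le> iv \<phi> \<sigma> * awp Cb I \<sigma> + iv (\<lambda>s. \<not> \<phi> s) \<sigma> * f \<sigma>"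
    and h2: "dPAST (While \<phi> Cb I)"
    and h3: "suitable_OST (While \<phi> Cb I) f"
  shows "\<forall>\<sigma>. I \<sigma> \<le> awp (While \<phi> Cb I) f \<sigma>"
proof
  fix \<sigma>
  obtain b where "0 \<le> b" and I_finite: "\<And>\<sigma>. I \<sigma> < \<infinity>"
    and increments: "\<And>\<sigma>. iv \<phi> \<sigma> * awp Cb (\<lambda>\<tau>. ennreal \<bar>enn2real (I \<tau>) - enn2real (I \<sigma>)\<bar>) \<sigma> \<le> ennreal b"
    using h3 unfolding suitable_OST_def by auto
  have "wf Cb" using wf by simp
  have "(\<lambda>n. (loop_kernel \<phi> Cb I ^^ n) I \<sigma>) \<longlonglongrightarrow> 0"
    using loop_kernel_ert_le[OF \<open>wf Cb\<close>] h2 loop_kernel_const_one_le[OF \<open>wf Cb\<close> lf] I_finite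
      order_trans[OF loop_kernel_le_awp[OF \<open>wf Cb\<close>] increments] \<open>0 \<le> b\<close>
    by (intro finite_kernel_optional_stopping[OF finite_kernel_loop_kernel[OF lf]]) (auto simp: dPAST_def)
  then have "(\<lambda>n. awp (While \<phi> Cb I) f \<sigma> + (loop_kernel \<phi> Cb I ^^ n) I \<sigma>)
      \<longlonglongrightarrow> awp (While \<phi> Cb I) f \<sigma>"
    using tendsto_add[OF tendsto_const] by fastforce
  then show "I \<sigma> \<le> awp (While \<phi> Cb I) f \<sigma>"
    using awp_While_ge_unrolled[OF \<open>wf Cb\<close> lf] h1 by (intro LIMSEQ_le_const) auto
qed

end
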